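(* Let $n=2^m$ for a positive integer $m$. Let $C_0\subseteq F^n$ be a binary code of length $n$, size $2^{n-1}/n$ and minimum distance $4$ all of whose words have even weight, and let $C_1\subseteq F^n$ be a binary code of length $n$, size $2^{n-1}/n$ and minimum distance $4$ all of whose words have odd weight. Then there exists a set $C\subseteq X^n$ with $|C| = 2^{n-1}/n$, in which any two distinct words are at Hamming distance at least $3$, such that $e(C)=C_0$ and $o(C)=C_1$.
   Context: $F^n$ is the set of binary words of length $n$; $X^n$ is the set of words of length $n$ over $\{*,0,1\}$ with exactly one $*$ (equivalently, ternary words of length $n$ and weight $n-1$). The Hamming distance between words of $X^n\cup F^n$ is the number of coordinates in which they differ. A word $\mathbf{x}\in X^n$ is identified with the pair of binary words obtained by replacing $*$ by $0$ and by $1$ (e.g. $01{*}0=\{0100,0110\}$); one of them has even weight, denoted $e(\mathbf{x})$, and the other odd weight, denoted $o(\mathbf{x})$. For $C\subseteq X^n$, $e(C)=\{e(\mathbf{c}):\mathbf{c}\in C\}$ and $o(C)=\{o(\mathbf{c}):\mathbf{c}\in C\}$. *)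

theory Defs
  imports Main
begin

text \<open>Binary words of length n: bool lists (True = 1). Words of X^n: lists over
  bool option, where None is the symbol * and Some b is the bit b.\<close>

definition F :: "nat \<Rightarrow> bool list set" where
  "F n = {w. length w = n}"

definition X :: "nat \<Rightarrow> bool option list set" where
  "X n = {x. length x = n \<and> card {i. i < n \<and> x ! i = None} = 1}"

definition hdist :: "'a list \<Rightarrow> 'a list \<Rightarrow> nat" where
  "hdist u v = card {i. i < length u \<and> u ! i \<noteq> v ! i}"

definition weight :: "bool list \<Rightarrow> nat" where
  "weight w = card {i. i < length w \<and> w ! i}"

definition min_dist :: "'a list set \<Rightarrow> nat \<Rightarrow> bool" where
  "min_dist C d \<longleftrightarrow> (\<forall>u\<in>C. \<forall>v\<in>C. u \<noteq> v \<longrightarrow> d \<le> hdist u v)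
                   \<and> (\<exists>u\<in>C. \<exists>v\<in>C. u \<noteq> v \<and> hdist u v = d)"

definition fill :: "bool option list \<Rightarrow> bool \<Rightarrow> bool list" where
  "fill x b = map (\<lambda>c. case c of None \<Rightarrow> b | Some a \<Rightarrow> a) x"

definition e_word :: "bool option list \<Rightarrow> bool list" where
  "e_word x = (if even (weight (fill x False)) then fill x False else fill x True)"

definition o_word :: "bool option list \<Rightarrow> bool list" where
  "o_word x = (if odd (weight (fill x False)) then fill x False else fill x True)"

end

theory Submission
  imports Defs
begin

text \<open>A code of size \<open>2^(n-1)/n\<close> and minimum distance at least 3 inside one parity
  class is perfect there: the \<open>n\<close> one-bit flips of its words are pairwise distinct, have the
  opposite parity, and are exactly \<open>2^(n-1)\<close> in number. So every even word is a flip of a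
  unique word of \<open>C1\<close>, and every odd word a flip of a unique word of \<open>C0\<close>. Starring \<open>c1 \<in> C1\<close>
  at those positions \<open>i\<close> where the flip lands in \<open>C0\<close> gives \<open>C\<close> with \<open>o(C) = C1\<close>, \<open>e(C) = C0\<close>.
  Distinct stars on one \<open>c1\<close> would give two words of \<open>C0\<close> at distance 2, so distinct words
  of \<open>C\<close> come from words of \<open>C1\<close> at distance at least 4, and the stars cost at most 1.\<close>

lemma weight_conv_length_filter: "weight w = length (filter id w)"
  unfolding weight_def by (simp add: length_filter_conv_card)

lemma weight_Cons: "weight (b # w) = (if b then 1 else 0) + weight w"
  by (simp add: weight_conv_length_filter)

lemma weight_append: "weight (u @ v) = weight u + weight v"
  by (simp add: weight_conv_length_filter)

lemma weight_list_update:
  assumes "i < length w"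
  shows "weight (w[i := b]) + (if w ! i then 1 else 0) = weight w + (if b then 1 else 0)"
proof -
  have "weight w = weight (take i w) + (if w ! i then 1 else 0) + weight (drop (Suc i) w)"
    using id_take_nth_drop[OF assms] by (metis weight_append weight_Cons add.assoc)
  moreover have "weight (w[i := b]) = weight (take i w) + (if b then 1 else 0) + weight (drop (Suc i) w)"
    using upd_conv_take_nth_drop[OF assms] by (metis weight_append weight_Cons add.assoc)
  ultimately show ?thesis by simp
qed

lemma finite_words: "finite {w :: bool list. length w = k \<and> P w}"
  using finite_lists_length_eq[of "UNIV :: bool set" k] by (rule finite_subset[rotated]) auto

lemma card_words_parity: "card {w. length w = Suc k \<and> odd (weight w) = q} = 2 ^ k"
proof -
  let ?A = "\<lambda>p. {w. length w = k \<and> odd (weight w) = p}"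
  have split: "{w. length w = Suc k \<and> odd (weight w) = q} = Cons True ` ?A (\<not> q) \<union> Cons False ` ?A q"
    by (rule set_eqI, case_tac x) (auto simp: weight_Cons)
  have "card {w. length w = Suc k \<and> odd (weight w) = q} = card (?A (\<not> q)) + card (?A q)"
    unfolding split by (subst card_Un_disjoint) (auto simp: finite_words card_image)
  also have "\<dots> = card (?A (\<not> q) \<union> ?A q)"
    by (subst card_Un_disjoint) (auto simp: finite_words)
  also have "?A (\<not> q) \<union> ?A q = {w. length w = k}"
    by auto
  finally show ?thesis
    using card_lists_length_eq[of "UNIV :: bool set" k] by simp
qed

definition flip :: "bool list \<Rightarrow> nat \<Rightarrow> bool list" where
  "flip c i = c[i := \<not> c ! i]"

lemma length_flip [simp]: "length (flip c i) = length c"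
  by (simp add: flip_def)

lemma flip_flip [simp]: "i < length c \<Longrightarrow> flip (flip c i) i = c"
  by (simp add: flip_def)

lemma odd_weight_flip: "i < length c \<Longrightarrow> odd (weight (flip c i)) \<longleftrightarrow> even (weight c)"
  using weight_list_update[of i c "\<not> c ! i"] unfolding flip_def
  by (cases "c ! i"; simp; presburger)

lemma flip_eq_flip_imp_eq: "i < length c \<Longrightarrow> j < length c \<Longrightarrow> flip c i = flip c j \<Longrightarrow> i = j"
  unfolding flip_def by (metis nth_list_update_eq nth_list_update_neq)

lemma hdist_le_card_if_agree:
  assumes "finite S" and "\<And>k. k < length u \<Longrightarrow> k \<notin> S \<Longrightarrow> u ! k = v ! k"
  shows "hdist u v \<le> card S"
  unfolding hdist_def using assms by (intro card_mono) auto

lemma hdist_le_2_if_agree: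
  assumes "\<And>k. k < length u \<Longrightarrow> k \<noteq> i \<Longrightarrow> k \<noteq> j \<Longrightarrow> u ! k = v ! k"
  shows "hdist u v \<le> 2"
  using hdist_le_card_if_agree[of "{i, j}" u v] assms by (simp add: card_insert_if split: if_splits)

lemma hdist_le_2_if_flip_eq: "flip c i = flip c' j \<Longrightarrow> hdist c c' \<le> 2"
  by (rule hdist_le_2_if_agree[of _ i j]) (metis flip_def nth_list_update_neq)

lemma hdist_flip_flip_le_2: "hdist (flip c i) (flip c j) \<le> 2"
  by (rule hdist_le_2_if_agree[of _ i j]) (simp add: flip_def)

lemma flip_eq_flip_in_code:
  assumes "\<forall>u\<in>D. \<forall>v\<in>D. u \<noteq> v \<longrightarrow> 3 \<le> hdist u v"
    and "c \<in> D" "c' \<in> D" "i < length c" "j < length c" "flip c i = flip c' j"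
  shows "c = c' \<and> i = j"
proof -
  have "c = c'"
    using assms(1-3) hdist_le_2_if_flip_eq[OF assms(6)] by force
  with assms(4-6) show ?thesis
    using flip_eq_flip_imp_eq by blast
qed

lemma flips_cover_opposite_parity:
  assumes D: "D \<subseteq> F n" "\<forall>c\<in>D. odd (weight c) = q"
    and dist: "\<forall>u\<in>D. \<forall>v\<in>D. u \<noteq> v \<longrightarrow> 3 \<le> hdist u v"
    and card: "card D * n = 2 ^ (n - 1)" and "0 < n"
    and w: "length w = n" "odd (weight w) \<noteq> q"
  shows "\<exists>c\<in>D. \<exists>i<n. w = flip c i"
proof -
  let ?flips = "(\<lambda>(c, i). flip c i) ` (D \<times> {..<n})"
  let ?opposite = "{w. length w = Suc (n - 1) \<and> odd (weight w) = (\<not> q)}"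
  have len: "\<And>c. c \<in> D \<Longrightarrow> length c = n"
    using D(1) by (auto simp: F_def)
  have "inj_on (\<lambda>(c, i). flip c i) (D \<times> {..<n})"
    by (rule inj_onI) (use flip_eq_flip_in_code[OF dist] len in fastforce)
  then have "card ?flips = 2 ^ (n - 1)"
    using card by (simp add: card_image card_cartesian_product)
  moreover have "?flips \<subseteq> ?opposite"
    using \<open>0 < n\<close> len D(2) odd_weight_flip by force
  ultimately have "?flips = ?opposite"
    using card_words_parity[of "n - 1" "\<not> q"] by (intro card_subset_eq finite_words) auto
  moreover have "w \<in> ?opposite"
    using w \<open>0 < n\<close> by auto
  ultimately have "w \<in> ?flips"
    by simp
  then show ?thesis by auto
qed

definition star_at :: "bool list \<Rightarrow> nat \<Rightarrow> bool option list" where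
  "star_at c i = (map Some c)[i := None]"

lemma length_star_at [simp]: "length (star_at c i) = length c"
  by (simp add: star_at_def)

lemma nth_star_at: "k < length c \<Longrightarrow> star_at c i ! k = (if k = i then None else Some (c ! k))"
  by (simp add: star_at_def nth_list_update)

lemma fill_star_at: "i < length c \<Longrightarrow> fill (star_at c i) b = c[i := b]"
  by (rule nth_equalityI) (auto simp: fill_def nth_star_at nth_list_update)

lemma star_at_in_X: "i < length c \<Longrightarrow> star_at c i \<in> X (length c)"
proof -
  assume "i < length c"
  then have "{k. k < length c \<and> star_at c i ! k = None} = {i}"
    by (auto simp: nth_star_at split: if_splits)
  then show ?thesis by (simp add: X_def)
qed

lemma e_o_word_star_at:
  assumes "odd (weight c)" "i < length c"
  shows "e_word (star_at c i) = flip c i" "o_word (star_at c i) = c"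
proof -
  have "even (weight (flip c i))"
    using odd_weight_flip[OF assms(2)] assms(1) by simp
  moreover have "fill (star_at c i) (c ! i) = c" "fill (star_at c i) (\<not> c ! i) = flip c i"
    using assms(2) by (simp_all add: fill_star_at flip_def)
  ultimately show "e_word (star_at c i) = flip c i" "o_word (star_at c i) = c"
    using assms(1) by (cases "c ! i"; simp add: e_word_def o_word_def)+
qed

lemma hdist_le_Suc_hdist_star_at:
  assumes "length c' = length c" "i < length c"
  shows "hdist c c' \<le> Suc (hdist (star_at c i) (star_at c' j))"
proof -
  let ?E = "{k. k < length (star_at c i) \<and> star_at c i ! k \<noteq> star_at c' j ! k}"
  have "hdist c c' \<le> card (insert i ?E)"
    using assms by (intro hdist_le_card_if_agree) (auto simp: nth_star_at split: if_splits)
  also have "\<dots> \<le> Suc (hdist (star_at c i) (star_at c' j))"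
    by (simp add: card_insert_if hdist_def)
  finally show ?thesis .
qed

locale perfect_code_pair =
  fixes n :: nat and C0 C1 :: "bool list set"
  assumes C0_words: "C0 \<subseteq> F n" and C1_words: "C1 \<subseteq> F n"
    and C0_even: "\<forall>c\<in>C0. even (weight c)" and C1_odd: "\<forall>c\<in>C1. odd (weight c)"
    and C0_dist: "\<forall>u\<in>C0. \<forall>v\<in>C0. u \<noteq> v \<longrightarrow> 4 \<le> hdist u v"
    and C1_dist: "\<forall>u\<in>C1. \<forall>v\<in>C1. u \<noteq> v \<longrightarrow> 4 \<le> hdist u v"
    and odd_words_covered: "\<And>w. length w = n \<Longrightarrow> odd (weight w) \<Longrightarrow> \<exists>c\<in>C0. \<exists>i<n. w = flip c i"
    and even_words_covered: "\<And>w. length w = n \<Longrightarrow> even (weight w) \<Longrightarrow> \<exists>c\<in>C1. \<exists>i<n. w = flip c i"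
begin

definition code :: "bool option list set" where
  "code = {star_at c i | c i. c \<in> C1 \<and> i < n \<and> flip c i \<in> C0}"

lemma length_C0: "c \<in> C0 \<Longrightarrow> length c = n" and length_C1: "c \<in> C1 \<Longrightarrow> length c = n"
  using C0_words C1_words by (auto simp: F_def)

lemma code_subset_X: "code \<subseteq> X n"
  unfolding code_def using star_at_in_X length_C1 by fastforce

lemma e_word_star_at_C1: "c \<in> C1 \<Longrightarrow> i < n \<Longrightarrow> e_word (star_at c i) = flip c i"
  and o_word_star_at_C1: "c \<in> C1 \<Longrightarrow> i < n \<Longrightarrow> o_word (star_at c i) = c"
  using e_o_word_star_at C1_odd length_C1 by auto

lemma e_word_image_code: "e_word ` code = C0"
proof
  show "e_word ` code \<subseteq> C0"
    unfolding code_def using e_word_star_at_C1 by auto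
  show "C0 \<subseteq> e_word ` code"
  proof
    fix c0 assume "c0 \<in> C0"
    then obtain c1 i where "c1 \<in> C1" "i < n" "c0 = flip c1 i"
      using even_words_covered C0_even length_C0 by blast
    then have "star_at c1 i \<in> code" "e_word (star_at c1 i) = c0"
      using \<open>c0 \<in> C0\<close> e_word_star_at_C1 unfolding code_def by auto
    then show "c0 \<in> e_word ` code"
      by (metis image_eqI)
  qed
qed

lemma o_word_image_code: "o_word ` code = C1"
proof
  show "o_word ` code \<subseteq> C1"
    unfolding code_def using o_word_star_at_C1 by auto
  show "C1 \<subseteq> o_word ` code"
  proof
    fix c1 assume "c1 \<in> C1"
    then obtain c0 i where "c0 \<in> C0" "i < n" "c1 = flip c0 i"
      using odd_words_covered C1_odd length_C1 by blast
    then have "flip c1 i = c0"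
      using length_C0 by simp
    then have "star_at c1 i \<in> code" "o_word (star_at c1 i) = c1"
      using \<open>c0 \<in> C0\<close> \<open>c1 \<in> C1\<close> \<open>i < n\<close> o_word_star_at_C1 unfolding code_def by auto
    then show "c1 \<in> o_word ` code"
      by (metis image_eqI)
  qed
qed

lemma inj_on_e_word_code: "inj_on e_word code"
proof (rule inj_onI)
  fix x y assume "x \<in> code" "y \<in> code" and e: "e_word x = e_word y"
  then obtain c i c' j where x: "x = star_at c i" "c \<in> C1" "i < n"
    and y: "y = star_at c' j" "c' \<in> C1" "j < n"
    unfolding code_def by blast
  have "flip c i = flip c' j"
    using e x y e_word_star_at_C1 by simp
  moreover have "\<forall>u\<in>C1. \<forall>v\<in>C1. u \<noteq> v \<longrightarrow> 3 \<le> hdist u v"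
    using C1_dist by force
  ultimately show "x = y"
    using flip_eq_flip_in_code[of C1 c c' i j] x y length_C1 by simp
qed

lemma card_code: "card code = card C0"
  using card_image[OF inj_on_e_word_code] e_word_image_code by simp

lemma code_dist: "x \<in> code \<Longrightarrow> y \<in> code \<Longrightarrow> x \<noteq> y \<Longrightarrow> 3 \<le> hdist x y"
proof -
  assume "x \<in> code" "y \<in> code" "x \<noteq> y"
  then obtain c i c' j where x: "x = star_at c i" "c \<in> C1" "i < n" "flip c i \<in> C0"
    and y: "y = star_at c' j" "c' \<in> C1" "j < n" "flip c' j \<in> C0"
    unfolding code_def by blast
  have "c \<noteq> c'"
  proof
    assume "c = c'"
    with \<open>x \<noteq> y\<close> x y have "flip c i \<noteq> flip c j"
      using flip_eq_flip_imp_eq length_C1 by metis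
    then show False
      using C0_dist x y \<open>c = c'\<close> hdist_flip_flip_le_2[of c i j] by fastforce
  qed
  then have "4 \<le> hdist c c'"
    using C1_dist x y by blast
  moreover have "hdist c c' \<le> Suc (hdist x y)"
    using hdist_le_Suc_hdist_star_at x y length_C1 by simp
  ultimately show "3 \<le> hdist x y" by simp
qed

end

lemma two_power_pred_div_mult:
  assumes "n = 2 ^ m" "0 < m"
  shows "2 ^ (n - 1) div n * n = (2::nat) ^ (n - 1)"
proof -
  have "m \<le> n - 1"
    using assms less_exp[of m] by linarith
  then have "n dvd 2 ^ (n - 1)"
    using assms(1) by (simp add: le_imp_power_dvd)
  then show ?thesis by simp
qed

theorem lemma1:
  fixes m n :: nat and C0 C1 :: "bool list set"
  assumes "m > 0" and "n = 2 ^ m"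
    and "C0 \<subseteq> F n" and "card C0 = 2 ^ (n - 1) div n" and "min_dist C0 4"
    and "\<forall>c\<in>C0. even (weight c)"
    and "C1 \<subseteq> F n" and "card C1 = 2 ^ (n - 1) div n" and "min_dist C1 4"
    and "\<forall>c\<in>C1. odd (weight c)"
  shows "\<exists>C. C \<subseteq> X n \<and> card C = 2 ^ (n - 1) div n
           \<and> (\<forall>x\<in>C. \<forall>y\<in>C. x \<noteq> y \<longrightarrow> 3 \<le> hdist x y)
           \<and> e_word ` C = C0 \<and> o_word ` C = C1"
proof -
  have "0 < n"
    using assms(2) by simp
  have card: "card C0 * n = 2 ^ (n - 1)" "card C1 * n = 2 ^ (n - 1)"
    using two_power_pred_div_mult[OF assms(2,1)] assms(4,8) by simp_all
  have dist4: "\<forall>u\<in>C0. \<forall>v\<in>C0. u \<noteq> v \<longrightarrow> 4 \<le> hdist u v" "\<forall>u\<in>C1. \<forall>v\<in>C1. u \<noteq> v \<longrightarrow> 4 \<le> hdist u v"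
    using assms(5,9) unfolding min_dist_def by blast+
  then have dist3: "\<forall>u\<in>C0. \<forall>v\<in>C0. u \<noteq> v \<longrightarrow> 3 \<le> hdist u v" "\<forall>u\<in>C1. \<forall>v\<in>C1. u \<noteq> v \<longrightarrow> 3 \<le> hdist u v"
    by force+
  interpret perfect_code_pair n C0 C1
  proof
    show "\<exists>c\<in>C0. \<exists>i<n. w = flip c i" if "length w = n" "odd (weight w)" for w
      using flips_cover_opposite_parity[OF assms(3) _ dist3(1) card(1) \<open>0 < n\<close>, of False] assms(6) that by simp
    show "\<exists>c\<in>C1. \<exists>i<n. w = flip c i" if "length w = n" "even (weight w)" for w
      using flips_cover_opposite_parity[OF assms(7) _ dist3(2) card(2) \<open>0 < n\<close>, of True] assms(10) that by simp
  qed (fact assms(3,6,7,10) dist4)+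
  show ?thesis
    using code_subset_X card_code code_dist e_word_image_code o_word_image_code assms(4)
    by (intro exI[of _ code]) simp
qed

end
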